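(* Let $\mathcal{P}\subseteq[0,1]^n$ be a polytope such that $\mathcal{P}\cap(0,1)^n\neq\emptyset$. If $\mathcal{P}$ is not of the form $\mathcal{P}=[0,1]^n\cap\mathcal{H}$ for some affine subspace $\mathcal{H}\subseteq\mathbb{R}^n$, then no Bernoulli factory for $\mathcal{P}$ exists.
   Context: A Bernoulli factory with output set $V$ (for inputs $x=(x_1,\dots,x_n)\in[0,1]^n$) is a (possibly infinite) rooted binary tree in which every internal node is labeled either by an index $i\in[n]$ or by a known constant $c\in(0,1)$, the two edges from an internal node to its children are labeled $0$ and $1$, and every leaf is labeled by an element of $V$. On input $x$, one starts at the root; at an internal node labeled $i$ one flips a fresh independent coin that equals $1$ with probability $x_i$ (an "$x_i$-coin"), at a node labeled $c$ a fresh independent coin with bias $c$, and follows the edge labeled by the outcome; on reaching a leaf one outputs its label. $\mathcal{F}(x)$ denotes the random output ($\mathcal{F}(x)=\emptyset$ if no leaf is reached); $\mathcal{F}$ terminates almost surely on $S$ if $\Pr[\mathcal{F}(x)=\emptyset]=0$ for all $x\in S$. For a polytope $\mathcal{P}\subseteq[0,1]^n$ with vertex set $V$ (vertices viewed as vectors in $\mathbb{R}^n$), a Bernoulli factory for $\mathcal{P}$ is a Bernoulli factory $\mathcal{F}$ with output set $V$ that terminates almost surely on $\mathcal{P}\cap(0,1)^n$ and satisfies $\mathbb{E}[\mathcal{F}(x)]=x$ for all $x\in\mathcal{P}\cap(0,1)^n$. *)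

theory Defs
  imports "HOL-Analysis.Analysis"
begin

text \<open>Nodes of a Bernoulli factory tree: a leaf with an output label,
  an internal node flipping an x_i-coin (index i of type 'n), or an internal
  node flipping a coin with known constant bias c.\<close>
datatype ('n, 'v) bf_node = is_Leaf: Leaf (leaf_label: 'v) | Coin 'n | Const real

text \<open>A (possibly infinite) rooted binary tree is encoded as a map from
  finite bit-strings (paths from the root; the root is [], the child of p
  along the edge labeled b is p @ [b], True = 1, False = 0) to node labels.
  Only nodes all of whose proper ancestors are internal belong to the tree;
  labels at other positions are irrelevant.\<close>
type_synonym ('n, 'v) bf_tree = "bool list \<Rightarrow> ('n, 'v) bf_node"

definition in_tree :: "('n, 'v) bf_tree \<Rightarrow> bool list \<Rightarrow> bool" where
  "in_tree T p \<longleftrightarrow> (\<forall>k<length p. \<not> is_Leaf (T (take k p)))"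

definition bf_wf :: "'v set \<Rightarrow> ('n, 'v) bf_tree \<Rightarrow> bool" where
  "bf_wf V T \<longleftrightarrow> (\<forall>p. in_tree T p \<longrightarrow>
     (case T p of Leaf v \<Rightarrow> v \<in> V | Coin i \<Rightarrow> True | Const c \<Rightarrow> 0 < c \<and> c < 1))"

fun edge_prob :: "('n::finite, 'v) bf_node \<Rightarrow> bool \<Rightarrow> real ^ 'n \<Rightarrow> real" where
  "edge_prob (Coin i) b x = (if b then x $ i else 1 - x $ i)"
| "edge_prob (Const c) b x = (if b then c else 1 - c)"
| "edge_prob (Leaf v) b x = 0"

definition reach_prob :: "('n::finite, 'v) bf_tree \<Rightarrow> real ^ 'n \<Rightarrow> bool list \<Rightarrow> real" where
  "reach_prob T x p = (\<Prod>k<length p. edge_prob (T (take k p)) (p ! k) x)"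

definition leaf_paths :: "('n, 'v) bf_tree \<Rightarrow> bool list set" where
  "leaf_paths T = {p. in_tree T p \<and> is_Leaf (T p)}"

definition bf_prob :: "('n::finite, 'v) bf_tree \<Rightarrow> real ^ 'n \<Rightarrow> 'v \<Rightarrow> real" where
  "bf_prob T x v = infsum (reach_prob T x) {p \<in> leaf_paths T. T p = Leaf v}"

definition bf_prob_none :: "('n::finite, 'v) bf_tree \<Rightarrow> real ^ 'n \<Rightarrow> real" where
  "bf_prob_none T x = 1 - infsum (reach_prob T x) (leaf_paths T)"

definition unit_cube :: "(real ^ 'n) set" where
  "unit_cube = {x. \<forall>i. 0 \<le> x $ i \<and> x $ i \<le> 1}"

definition open_unit_cube :: "(real ^ 'n) set" where
  "open_unit_cube = {x. \<forall>i. 0 < x $ i \<and> x $ i < 1}"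

definition vertices :: "(real ^ 'n) set \<Rightarrow> (real ^ 'n) set" where
  "vertices P = {v. v extreme_point_of P}"

definition bernoulli_factory_for :: "(real ^ 'n) set \<Rightarrow> ('n::finite, real ^ 'n) bf_tree \<Rightarrow> bool" where
  "bernoulli_factory_for P T \<longleftrightarrow>
     bf_wf (vertices P) T \<and>
     (\<forall>x \<in> P \<inter> open_unit_cube.
        bf_prob_none T x = 0 \<and>
        (\<Sum>v\<in>vertices P. bf_prob T x v *\<^sub>R v) = x)"

end

theory Submission imports Defs begin

(* On the open cube every leaf of a Bernoulli factory is reached with positive probability,
   so the output distributions at any two points z, w of P there have the same support;
   hence z + e (z - w) is still a convex combination of the vertices for small e > 0.
   Points of P in the open cube can thus be pushed beyond themselves away from any point
   of P, which places them in the relative interior of P. A segment in the affine hull of P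
   from such a point to a point of the cube outside P would then have to leave P through
   the relative boundary inside the open cube, which is impossible. So P is the cube
   intersected with its affine hull. *)

lemma unit_cube_eq_cbox: "unit_cube = cbox 0 (1 :: real ^ 'n)"
  by (auto simp: unit_cube_def mem_box_cart)

lemma interior_unit_cube: "interior unit_cube = (open_unit_cube :: (real ^ 'n) set)"
  by (auto simp: unit_cube_eq_cbox open_unit_cube_def mem_box_cart)

lemma convex_unit_cube: "convex (unit_cube :: (real ^ 'n) set)"
  by (simp add: unit_cube_eq_cbox)

lemma finite_vertices_polytope: "polytope P \<Longrightarrow> finite (vertices P)"
  by (simp add: vertices_def finite_polyhedron_extreme_points polytope_imp_polyhedron)

lemma polytope_eq_convex_hull_vertices: "polytope P \<Longrightarrow> P = convex hull (vertices P)"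
  by (simp add: vertices_def Krein_Milman_Minkowski polytope_imp_compact polytope_imp_convex)

lemma convex_hull_extend_beyond_barycenter:
  fixes V :: "'a::real_vector set"
  assumes "finite V"
    and p: "\<forall>v\<in>V. 0 \<le> p v" "sum p V = 1"
    and q: "\<forall>v\<in>V. 0 \<le> q v" "sum q V = 1"
    and supp: "\<forall>v\<in>V. 0 < q v \<longrightarrow> 0 < p v"
  defines "z \<equiv> \<Sum>v\<in>V. p v *\<^sub>R v" and "w \<equiv> \<Sum>v\<in>V. q v *\<^sub>R v"
  shows "\<exists>e>0. z + e *\<^sub>R (z - w) \<in> convex hull V"
proof -
  define e where "e = Min (insert 1 (p ` {v\<in>V. 0 < p v}))"
  have "e > 0" using \<open>finite V\<close> by (auto simp: e_def)
  have e_le: "e \<le> p v" if "v \<in> V" "0 < p v" for v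
    using \<open>finite V\<close> that by (auto simp: e_def)
  have q_le: "q v \<le> 1" if "v \<in> V" for v
    using member_le_sum[of v V q] q \<open>finite V\<close> that by auto
  define c where "c v = (1 + e) * p v - e * q v" for v
  have "0 \<le> c v" if v: "v \<in> V" for v
  proof (cases "0 < p v")
    case True
    have "e * q v \<le> e" using q_le[OF v] \<open>e > 0\<close> by (simp add: mult_left_le)
    then have "e * q v \<le> p v" using e_le[OF v True] by linarith
    then show ?thesis
      using mult_pos_pos[OF \<open>e > 0\<close> True] by (simp add: c_def algebra_simps)
  next
    case False
    then show ?thesis using p q supp v by (force simp: c_def)
  qed
  moreover have "sum c V = 1"
    using p q by (simp add: c_def sum_subtractf flip: sum_distrib_left)
  moreover have "(\<Sum>v\<in>V. c v *\<^sub>R v) = z + e *\<^sub>R (z - w)"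
    by (simp add: z_def w_def c_def scaleR_sum_right sum_subtractf sum.distrib algebra_simps)
  ultimately show ?thesis
    using \<open>e > 0\<close> by (auto simp: convex_hull_finite[OF \<open>finite V\<close>])
qed

lemma Int_interior_subset_rel_interior_if_extendable:
  fixes P K :: "'a::euclidean_space set"
  assumes "convex P" "convex K" "P \<subseteq> K"
    and extend: "\<And>z w. z \<in> P \<inter> interior K \<Longrightarrow> w \<in> P \<inter> interior K \<Longrightarrow>
      \<exists>e>0. z + e *\<^sub>R (z - w) \<in> P"
  shows "P \<inter> interior K \<subseteq> rel_interior P"
proof
  fix z assume z: "z \<in> P \<inter> interior K"
  have "\<exists>e>1. (1 - e) *\<^sub>R x + e *\<^sub>R z \<in> P" if x: "x \<in> P" for x
  proof (cases "x = z")
    case True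
    then show ?thesis using z by (intro exI[of _ 2]) (simp add: algebra_simps scaleR_2)
  next
    case False
    \<comment> \<open>The midpoint lies in the interior of K, and moving away from it is moving away from x.\<close>
    have "midpoint z x \<in> open_segment z x" using False by simp
    then have "midpoint z x \<in> interior K"
      using in_interior_closure_convex_segment[OF \<open>convex K\<close>, of z x] z x \<open>P \<subseteq> K\<close> closure_subset
      by blast
    moreover have "midpoint z x \<in> P"
      using convexD[OF \<open>convex P\<close>, of z x "1/2" "1/2"] z x by (simp add: midpoint_def scaleR_right_distrib)
    ultimately obtain e where "e > 0" "z + e *\<^sub>R (z - midpoint z x) \<in> P"
      using extend z by blast
    moreover have "z + e *\<^sub>R (z - midpoint z x) = (1 - (1 + e / 2)) *\<^sub>R x + (1 + e / 2) *\<^sub>R z"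
      by (simp add: midpoint_def algebra_simps) (simp flip: scaleR_add_left)
    ultimately show ?thesis by (intro exI[of _ "1 + e / 2"]) auto
  qed
  then show "z \<in> rel_interior P"
    using convex_rel_interior_iff[OF \<open>convex P\<close>] z by blast
qed

lemma Int_affine_hull_subset_if_Int_interior_subset_rel_interior:
  fixes P K :: "'a::euclidean_space set"
  assumes "closed P" "convex K" "P \<inter> interior K \<noteq> {}"
    and "P \<inter> interior K \<subseteq> rel_interior P"
  shows "K \<inter> affine hull P \<subseteq> P"
proof
  fix y assume y: "y \<in> K \<inter> affine hull P"
  show "y \<in> P"
  proof (rule ccontr)
    assume "y \<notin> P"
    obtain x where x: "x \<in> P" "x \<in> interior K" using assms(3) by blast
    define S where "S = closed_segment x y"
    have "S \<subseteq> affine hull P"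
      unfolding S_def using x y hull_inc[of x P]
      by (intro closed_segment_subset affine_imp_convex affine_affine_hull) auto
    have "S \<inter> P \<subseteq> interior K"
    proof
      fix s assume s: "s \<in> S \<inter> P"
      then have "s \<noteq> y" using \<open>y \<notin> P\<close> by blast
      then have "s = x \<or> s \<in> open_segment x y" using s by (auto simp: S_def open_segment_def)
      then show "s \<in> interior K"
        using in_interior_closure_convex_segment[OF \<open>convex K\<close> x(2), of y] y closure_subset x by blast
    qed
    then have eq: "S \<inter> P = S \<inter> rel_interior P"
      using assms(4) rel_interior_subset by blast
    have "openin (top_of_set S) (S \<inter> P)"
    proof -
      obtain U where "open U" "rel_interior P = affine hull P \<inter> U"
        using openin_rel_interior[of P] by (auto simp: openin_open)
      then show ?thesis
        using eq \<open>S \<subseteq> affine hull P\<close> by (auto simp: openin_open)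
    qed
    moreover have "closedin (top_of_set S) (S \<inter> P)"
      using \<open>closed P\<close> by (simp add: closedin_closed_Int)
    ultimately have "S \<inter> P = {} \<or> S \<inter> P = S"
      using connected_segment[of x y] by (simp add: S_def connected_clopen)
    then show False using x \<open>y \<notin> P\<close> by (auto simp: S_def)
  qed
qed

lemma reach_prob_pos:
  assumes "bf_wf V T" "x \<in> open_unit_cube" "in_tree T p"
  shows "0 < reach_prob T x p"
  unfolding reach_prob_def
proof (rule prod_pos)
  fix k assume "k \<in> {..<length p}"
  then have "\<not> is_Leaf (T (take k p))" "in_tree T (take k p)"
    using assms(3) by (auto simp: in_tree_def)
  moreover have "case T (take k p) of Leaf v \<Rightarrow> v \<in> V | Coin i \<Rightarrow> True | Const c \<Rightarrow> 0 < c \<and> c < 1"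
    using assms(1) calculation(2) by (simp add: bf_wf_def)
  ultimately show "0 < edge_prob (T (take k p)) (p ! k) x"
    using assms(2) by (cases "T (take k p)") (auto simp: open_unit_cube_def)
qed

lemma bf_prob_nonneg: "bf_wf V T \<Longrightarrow> x \<in> open_unit_cube \<Longrightarrow> 0 \<le> bf_prob T x v"
  unfolding bf_prob_def
  by (intro infsum_nonneg) (auto simp: leaf_paths_def intro: less_imp_le reach_prob_pos)

lemma summable_reach_prob_leaf_paths:
  assumes "bf_prob_none T x = 0" "A \<subseteq> leaf_paths T"
  shows "reach_prob T x summable_on A"
proof (rule summable_on_subset_banach[OF _ assms(2)])
  show "reach_prob T x summable_on leaf_paths T"
    using assms(1) infsum_not_exists by (fastforce simp: bf_prob_none_def)
qed

lemma sum_bf_prob: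
  assumes "bf_wf V T" "finite V" "bf_prob_none T x = 0"
  shows "sum (bf_prob T x) V = 1"
proof -
  have leaves: "leaf_paths T = (\<Union>v\<in>V. {p \<in> leaf_paths T. T p = Leaf v})"
    using assms(1) by (force simp: bf_wf_def leaf_paths_def is_Leaf_def split: bf_node.splits)
  have "reach_prob T x summable_on {p \<in> leaf_paths T. T p = Leaf v}" for v
    using summable_reach_prob_leaf_paths[OF assms(3)] by simp
  then have "sum (bf_prob T x) V = infsum (reach_prob T x) (leaf_paths T)"
    unfolding bf_prob_def by (subst leaves, subst sum_infsum[OF assms(2)]) auto
  then show ?thesis
    using assms(3) by (simp add: bf_prob_none_def)
qed

lemma bf_prob_pos_iff:
  assumes "bf_wf V T" "x \<in> open_unit_cube" "bf_prob_none T x = 0"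
  shows "0 < bf_prob T x v \<longleftrightarrow> (\<exists>p\<in>leaf_paths T. T p = Leaf v)"
proof
  assume "0 < bf_prob T x v"
  then have "{p \<in> leaf_paths T. T p = Leaf v} \<noteq> {}"
    by (metis bf_prob_def infsum_empty less_irrefl)
  then show "\<exists>p\<in>leaf_paths T. T p = Leaf v" by blast
next
  assume "\<exists>p\<in>leaf_paths T. T p = Leaf v"
  then obtain p where p: "p \<in> leaf_paths T" "T p = Leaf v" by blast
  have pos: "0 < reach_prob T x p'" if "p' \<in> leaf_paths T" for p'
    using reach_prob_pos[OF assms(1,2)] that by (simp add: leaf_paths_def)
  have "infsum (reach_prob T x) {p} \<le> bf_prob T x v"
    unfolding bf_prob_def
  proof (rule infsum_mono_neutral)
    show "reach_prob T x summable_on {p' \<in> leaf_paths T. T p' = Leaf v}"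
      using summable_reach_prob_leaf_paths[OF assms(3)] by simp
  qed (use p pos in \<open>auto intro: less_imp_le\<close>)
  then show "0 < bf_prob T x v" using pos[OF p(1)] by simp
qed

lemma bernoulli_factory_extend_beyond:
  assumes "bernoulli_factory_for P T" "polytope P"
    and z: "z \<in> P \<inter> open_unit_cube" and w: "w \<in> P \<inter> open_unit_cube"
  shows "\<exists>e>0. z + e *\<^sub>R (z - w) \<in> P"
proof -
  have wf: "bf_wf (vertices P) T"
    and terminates: "bf_prob_none T z = 0" "bf_prob_none T w = 0"
    and bary: "(\<Sum>v\<in>vertices P. bf_prob T z v *\<^sub>R v) = z" "(\<Sum>v\<in>vertices P. bf_prob T w v *\<^sub>R v) = w"
    using assms unfolding bernoulli_factory_for_def by auto
  have fin: "finite (vertices P)" using finite_vertices_polytope[OF \<open>polytope P\<close>] .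
  have "\<exists>e>0. z + e *\<^sub>R (z - w) \<in> convex hull (vertices P)"
    using convex_hull_extend_beyond_barycenter[OF fin, of "bf_prob T z" "bf_prob T w"] z w
    unfolding bary
    by (simp add: bf_prob_nonneg[OF wf] sum_bf_prob[OF wf fin] bf_prob_pos_iff[OF wf] terminates)
  then show ?thesis
    using polytope_eq_convex_hull_vertices[OF \<open>polytope P\<close>] by simp
qed

theorem theorem4p1:
  fixes P :: "(real ^ 'n) set"
  assumes "polytope P"
    and "P \<subseteq> unit_cube"
    and "P \<inter> open_unit_cube \<noteq> {}"
    and "\<not> (\<exists>H. affine H \<and> P = unit_cube \<inter> H)"
  shows "\<not> (\<exists>T. bernoulli_factory_for P T)"
proof
  assume "\<exists>T. bernoulli_factory_for P T"
  then obtain T where T: "bernoulli_factory_for P T" ..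
  have "P \<inter> interior unit_cube \<subseteq> rel_interior P"
    using Int_interior_subset_rel_interior_if_extendable[OF
        polytope_imp_convex[OF assms(1)] convex_unit_cube assms(2)]
      bernoulli_factory_extend_beyond[OF T assms(1)]
    by (simp add: interior_unit_cube)
  then have "unit_cube \<inter> affine hull P \<subseteq> P"
    using Int_affine_hull_subset_if_Int_interior_subset_rel_interior[OF
        compact_imp_closed[OF polytope_imp_compact[OF assms(1)]] convex_unit_cube]
      assms(3) by (simp add: interior_unit_cube)
  then have "P = unit_cube \<inter> affine hull P"
    using assms(2) hull_subset[of P affine] by blast
  then show False
    using assms(4) affine_affine_hull by blast
qed

end
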